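(* Let $N\ge3$. Take $X_j=\sigma_x$ for $j=1,\dots,N-1$, $X_j'=\sigma_x$ for $j=1,\dots,N-2$, $X_{N-1}'=\sigma_y$, and $X_N=(\sigma_x-\sigma_y)/\sqrt2$, $X_N'=(\sigma_x+\sigma_y)/\sqrt2$; let $I^N_{CHSH}=\sum_{a,b\in\{0,1\}}(-1)^{ab}\mathbb A_a\otimes\mathbb B_b$. Then $2\sqrt2$ is the largest eigenvalue of $I^N_{CHSH}$, $|G\rangle$ is an eigenvector for it, and its eigenspace has dimension exactly $2^{N-2}$, spanned by the states $\bigotimes_{k\in K}\sigma_x^{(k)}|G\rangle$ with $K\subseteq\{1,\dots,N-2\}$.
   Context: $|G\rangle=\frac{1}{\sqrt2}(|0\cdots0\rangle+|1\cdots1\rangle)$ is the $N$-qubit GHZ state; $\sigma_x,\sigma_y,\sigma_z$ are Pauli matrices and $\sigma_x^{(k)}$ denotes $\sigma_x$ acting on the $k$-th qubit. $\mathbb A_0=\bigotimes_{j=1}^{N-1}X_j$, $\mathbb A_1=\bigotimes_{j=1}^{N-1}X_j'$ act on qubits $1,\dots,N-1$, and $\mathbb B_0=X_N$, $\mathbb B_1=X_N'$ act on qubit $N$. *)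

theory Defs
  imports "Jordan_Normal_Form.Jordan_Normal_Form_Uniqueness"
begin

definition sigma_x :: "complex mat" where
  "sigma_x = mat_of_rows_list 2 [[0, 1], [1, 0]]"
definition sigma_y :: "complex mat" where
  "sigma_y = mat_of_rows_list 2 [[0, -\<i>], [\<i>, 0]]"

(* Kronecker (tensor) product; the left factor is the more significant index *)
definition kron :: "complex mat \<Rightarrow> complex mat \<Rightarrow> complex mat" where
  "kron A B = mat (dim_row A * dim_row B) (dim_col A * dim_col B)
     (\<lambda>(i, j). A $$ (i div dim_row B, j div dim_col B) * B $$ (i mod dim_row B, j mod dim_col B))"

(* tensor product of a list of operators, first element acts on the first qubit *)
definition kron_list :: "complex mat list \<Rightarrow> complex mat" where
  "kron_list Ms = foldr kron Ms (1\<^sub>m 1)"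

(* N-qubit GHZ state (|0...0> + |1...1>)/sqrt 2; |0...0> has index 0, |1...1> index 2^N - 1 *)
definition ghz :: "nat \<Rightarrow> complex vec" where
  "ghz N = vec (2 ^ N) (\<lambda>i. if i = 0 \<or> i = 2 ^ N - 1 then complex_of_real (1 / sqrt 2) else 0)"

definition X :: "nat \<Rightarrow> nat \<Rightarrow> complex mat" where
  "X N j = (if j = N then (1 / complex_of_real (sqrt 2)) \<cdot>\<^sub>m (sigma_x - sigma_y) else sigma_x)"
definition X' :: "nat \<Rightarrow> nat \<Rightarrow> complex mat" where
  "X' N j = (if j = N then (1 / complex_of_real (sqrt 2)) \<cdot>\<^sub>m (sigma_x + sigma_y)
             else if j = N - 1 then sigma_y else sigma_x)"

definition AA :: "nat \<Rightarrow> nat \<Rightarrow> complex mat" where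
  "AA N a = kron_list (map (if a = 0 then X N else X' N) [1..<N])"
definition BB :: "nat \<Rightarrow> nat \<Rightarrow> complex mat" where
  "BB N b = (if b = 0 then X N N else X' N N)"

definition I_CHSH :: "nat \<Rightarrow> complex mat" where
  "I_CHSH N = kron (AA N 0) (BB N 0) + kron (AA N 0) (BB N 1)
             + kron (AA N 1) (BB N 0) + (-1) \<cdot>\<^sub>m kron (AA N 1) (BB N 1)"

definition sigma_x_on :: "nat \<Rightarrow> nat set \<Rightarrow> complex mat" where
  "sigma_x_on N K = kron_list (map (\<lambda>k. if k \<in> K then sigma_x else 1\<^sub>m 2) [1..<N+1])"

definition eigenspace :: "complex mat \<Rightarrow> complex \<Rightarrow> complex vec set" where
  "eigenspace A e = {v \<in> carrier_vec (dim_row A). A *\<^sub>v v = e \<cdot>\<^sub>v v}"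

end

theory Submission
  imports Defs
begin

text \<open>
  In the computational basis (qubit 1 most significant), \<open>I_CHSH N = \<sigma>\<^sub>x\<^sup>\<otimes>\<^sup>(\<^sup>N\<^sup>-\<^sup>2\<^sup>) \<otimes> W\<close>, where
  \<open>W = I_CHSH 2 = 2\<surd>2 (|00\<rangle>\<langle>11| + |11\<rangle>\<langle>00|)\<close> because \<open>B\<^sub>0 + B\<^sub>1 = \<surd>2 \<sigma>\<^sub>x\<close> and
  \<open>B\<^sub>0 - B\<^sub>1 = -\<surd>2 \<sigma>\<^sub>y\<close>. So \<open>I_CHSH N\<close> is \<open>2\<surd>2\<close> times the index reversal \<open>i \<mapsto> 2\<^sup>N - 1 - i\<close>, restricted
  to the basis states whose last two bits are \<open>00\<close> or \<open>11\<close>. Such an operator squares to \<open>8\<close> on its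
  support, so its eigenvalues are \<open>0\<close> and \<open>\<plusminus>2\<surd>2\<close>, and the \<open>2\<surd>2\<close>-eigenvectors are the
  reversal-invariant vectors on the support. A basis of these is \<open>(|m\<rangle> + |2\<^sup>N-1-m\<rangle>)/\<surd>2\<close> with
  \<open>m\<close> ending in \<open>00\<close>, and these are exactly the states \<open>\<sigma>\<^sub>x\<^sup>K|G\<rangle>\<close>, \<open>K \<subseteq> {1..N-2}\<close>.
\<close>

lemma mat_kernel_char_matrix:
  assumes A: "A \<in> carrier_mat n n"
  shows "mat_kernel (char_matrix A e) = eigenspace A e"
proof -
  have "char_matrix A e *\<^sub>v v = 0\<^sub>v n \<longleftrightarrow> A *\<^sub>v v = e \<cdot>\<^sub>v v" if v: "v \<in> carrier_vec n" for v
  proof (cases "v = 0\<^sub>v n")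
    case True
    have "M *\<^sub>v 0\<^sub>v n = 0\<^sub>v n" if "M \<in> carrier_mat n n" for M :: "complex mat"
      using that by auto
    moreover have "e \<cdot>\<^sub>v 0\<^sub>v n = (0\<^sub>v n :: complex vec)" by (simp add: vec_eq_iff)
    ultimately show ?thesis using True A by simp
  next
    case False
    then show ?thesis using eigenvector_char_matrix[OF A, of v e] A v unfolding eigenvector_def by auto
  qed
  then show ?thesis using A unfolding mat_kernel[OF char_matrix_closed[OF A]] eigenspace_def by auto
qed

lemma dim_gen_eigenspace_1_eq_card_basis:
  assumes A: "A \<in> carrier_mat n n" and B: "finite B" "B \<subseteq> carrier_vec n"
    and indpt: "\<not> module.lin_dep class_ring (module_vec TYPE(complex) n) B"
    and span: "module.span class_ring (module_vec TYPE(complex) n) B = eigenspace A e"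
  shows "dim_gen_eigenspace A e 1 = card B"
proof -
  let ?C = "char_matrix A e"
  have C: "?C \<in> carrier_mat n n" using A by simp
  interpret K: kernel n n ?C by unfold_locales (rule C)
  have B_ker: "B \<subseteq> mat_kernel ?C"
    using K.NC.in_own_span[OF B(2)] span mat_kernel_char_matrix[OF A] by simp
  have "K.basis B"
    unfolding K.Ker.basis_def K.lindep_same[OF B_ker] K.span_same[OF B_ker]
    using indpt span B_ker mat_kernel_char_matrix[OF A] by simp
  then have "kernel_dim ?C = card B" using K.Ker.dim_basis[OF B(1)] by simp
  then show ?thesis unfolding dim_gen_eigenspace_def using C by simp
qed

section \<open>Scaled reversals on paired indices\<close>

definition pair_state :: "nat \<Rightarrow> nat \<Rightarrow> complex vec" where
  "pair_state n m = vec n (\<lambda>j. if j = m \<or> j = n - 1 - m then complex_of_real (1 / sqrt 2) else 0)"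

lemma pair_state_carrier[simp]: "pair_state n m \<in> carrier_vec n"
  by (simp add: pair_state_def)

lemma pair_state_index:
  "j < n \<Longrightarrow> pair_state n m $ j = (if j = m \<or> j = n - 1 - m then complex_of_real (1 / sqrt 2) else 0)"
  by (simp add: pair_state_def)

lemma dim_pair_state[simp]: "dim_vec (pair_state n m) = n"
  by (simp add: pair_state_def)

text \<open>Each \<open>m \<in> R\<close> labels the pair \<open>{m, n - 1 - m}\<close>; \<open>flip_mat c\<close> is \<open>c\<close> times the reversal
  \<open>i \<mapsto> n - 1 - i\<close> on these pairs and zero elsewhere.\<close>
locale flip_pairs =
  fixes n :: nat and R :: "nat set"
  assumes R_less: "m \<in> R \<Longrightarrow> m < n"
    and flip_notin_R: "m \<in> R \<Longrightarrow> n - 1 - m \<notin> R"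
begin

abbreviation flip :: "nat \<Rightarrow> nat" where
  "flip i \<equiv> n - 1 - i"

definition paired :: "nat \<Rightarrow> bool" where
  "paired i \<longleftrightarrow> i \<in> R \<or> flip i \<in> R"

definition flip_mat :: "complex \<Rightarrow> complex mat" where
  "flip_mat c = mat n n (\<lambda>(i, j). if paired i \<and> j = flip i then c else 0)"

definition flip_invariant_vecs :: "complex vec set" where
  "flip_invariant_vecs = {v \<in> carrier_vec n. \<forall>i<n. v $ i = (if paired i then v $ flip i else 0)}"

lemma finite_R: "finite R"
  by (rule finite_subset[of _ "{..<n}"]) (auto dest: R_less)

lemma paired_flip: "i < n \<Longrightarrow> paired (flip i) \<longleftrightarrow> paired i"
  unfolding paired_def by auto

lemma flip_mat_carrier[simp]: "flip_mat c \<in> carrier_mat n n"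
  and flip_mat_dim[simp]: "dim_row (flip_mat c) = n" "dim_col (flip_mat c) = n"
  by (simp_all add: flip_mat_def)

lemma flip_mat_mult_vec_index:
  assumes v: "v \<in> carrier_vec n" and i: "i < n"
  shows "(flip_mat c *\<^sub>v v) $ i = (if paired i then c * v $ flip i else 0)"
proof -
  have "(flip_mat c *\<^sub>v v) $ i = (\<Sum>j<n. (if paired i \<and> j = flip i then c else 0) * v $ j)"
    using v i by (simp add: flip_mat_def scalar_prod_def atLeast0LessThan)
  also have "\<dots> = (\<Sum>j<n. if j = flip i then (if paired i then c * v $ j else 0) else 0)"
    by (rule sum.cong) auto
  also have "\<dots> = (if paired i then c * v $ flip i else 0)"
    using i by (subst sum.delta) auto
  finally show ?thesis .
qed

lemma eigenvalue_flip_mat: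
  assumes "eigenvalue (flip_mat c) k"
  shows "k = 0 \<or> k = c \<or> k = - c"
proof -
  obtain v where v: "v \<in> carrier_vec n" "v \<noteq> 0\<^sub>v n" "flip_mat c *\<^sub>v v = k \<cdot>\<^sub>v v"
    using assms unfolding eigenvalue_def eigenvector_def by auto
  obtain i where i: "i < n" "v $ i \<noteq> 0"
    using v(1,2) by (auto simp: vec_eq_iff)
  have eq: "(if paired j then c * v $ flip j else 0) = k * v $ j" if "j < n" for j
    using arg_cong[OF v(3), of "\<lambda>w. w $ j"] flip_mat_mult_vec_index[OF v(1) that] v(1) that by simp
  show ?thesis
  proof (cases "paired i")
    case False
    then show ?thesis using eq[OF i(1)] i(2) by simp
  next
    case True
    have fi: "flip i < n" "flip (flip i) = i" using i(1) by auto
    have "k * k * v $ i = k * (c * v $ flip i)" using eq[OF i(1)] True by simp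
    also have "\<dots> = c * (k * v $ flip i)" by simp
    also have "\<dots> = c * c * v $ i" using eq[OF fi(1)] True paired_flip[OF i(1)] fi(2) by simp
    finally have "(k - c) * (k + c) = 0" using i(2) by (simp add: algebra_simps)
    then show ?thesis by (auto simp: eq_neg_iff_add_eq_0)
  qed
qed

lemma eigenspace_flip_mat:
  assumes "c \<noteq> 0"
  shows "eigenspace (flip_mat c) c = flip_invariant_vecs"
proof -
  have "flip_mat c *\<^sub>v v = c \<cdot>\<^sub>v v \<longleftrightarrow> (\<forall>i<n. v $ i = (if paired i then v $ flip i else 0))"
    if v: "v \<in> carrier_vec n" for v
  proof -
    have "flip_mat c *\<^sub>v v = c \<cdot>\<^sub>v v \<longleftrightarrow> (\<forall>i<n. (flip_mat c *\<^sub>v v) $ i = c * v $ i)"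
      using v by (auto simp: vec_eq_iff)
    also have "\<dots> \<longleftrightarrow> (\<forall>i<n. (if paired i then c * v $ flip i else 0) = c * v $ i)"
      by (simp add: flip_mat_mult_vec_index[OF v] del: index_mult_mat_vec)
    also have "\<dots> \<longleftrightarrow> (\<forall>i<n. v $ i = (if paired i then v $ flip i else 0))"
      using assms by auto
    finally show ?thesis .
  qed
  then show ?thesis unfolding eigenspace_def flip_invariant_vecs_def by auto
qed

lemma pair_state_flip_invariant:
  assumes "m \<in> R"
  shows "pair_state n m \<in> flip_invariant_vecs"
proof -
  have "pair_state n m $ i = (if paired i then pair_state n m $ flip i else 0)" if i: "i < n" for i
  proof -
    have "flip i < n" using i by simp
    moreover have "i = m \<or> i = flip m \<longleftrightarrow> flip i = m \<or> flip i = flip m"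
      using i R_less[OF assms] by auto
    moreover have "\<not> paired i \<Longrightarrow> i \<noteq> m \<and> i \<noteq> flip m"
      using assms i R_less[OF assms] unfolding paired_def by auto
    ultimately show ?thesis using i by (auto simp: pair_state_index)
  qed
  then show ?thesis unfolding flip_invariant_vecs_def by simp
qed

lemma eigenvector_pair_state:
  assumes "c \<noteq> 0" and m: "m \<in> R"
  shows "eigenvector (flip_mat c) (pair_state n m) c"
proof -
  have "pair_state n m \<in> eigenspace (flip_mat c) c"
    using pair_state_flip_invariant[OF m] eigenspace_flip_mat[OF assms(1)] by simp
  moreover have "pair_state n m \<noteq> 0\<^sub>v n"
  proof
    assume "pair_state n m = 0\<^sub>v n"
    then have "pair_state n m $ m = 0" using R_less[OF m] by simp
    then show False using R_less[OF m] by (simp add: pair_state_index)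
  qed
  ultimately show ?thesis unfolding eigenvector_def eigenspace_def by simp
qed

lemma sum_pair_states_index:
  assumes i: "i < n"
  shows "(\<Sum>m\<in>R. f m * pair_state n m $ i) =
    complex_of_real (1 / sqrt 2) * ((if i \<in> R then f i else 0) + (if flip i \<in> R then f (flip i) else 0))"
proof -
  let ?h = "complex_of_real (1 / sqrt 2)"
  have "(\<Sum>m\<in>R. f m * pair_state n m $ i) =
     (\<Sum>m\<in>R. (if m = i then ?h * f m else 0) + (if m = flip i then ?h * f m else 0))"
  proof (rule sum.cong)
    fix m assume m: "m \<in> R"
    have "i = flip m \<longleftrightarrow> m = flip i" "m \<noteq> flip m"
      using i R_less[OF m] flip_notin_R[OF m] m by auto
    then show "f m * pair_state n m $ i =
      (if m = i then ?h * f m else 0) + (if m = flip i then ?h * f m else 0)"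
      using i by (auto simp: pair_state_index)
  qed simp
  also have "\<dots> = ?h * ((if i \<in> R then f i else 0) + (if flip i \<in> R then f (flip i) else 0))"
    by (simp add: sum.distrib finite_R distrib_left)
  finally show ?thesis .
qed

lemma inj_on_pair_state: "inj_on (pair_state n) R"
proof
  fix m m' assume m: "m \<in> R" and m': "m' \<in> R" and eq: "pair_state n m = pair_state n m'"
  have "pair_state n m' $ m = pair_state n m $ m" using eq by simp
  also have "\<dots> \<noteq> 0" using R_less[OF m] by (simp add: pair_state_index)
  finally have "m = m' \<or> m = flip m'"
    using R_less[OF m] pair_state_index[of m n m'] by (auto split: if_splits)
  then show "m = m'" using m flip_notin_R[OF m'] by auto
qed

lemma flip_invariant_index:
  assumes v: "v \<in> flip_invariant_vecs" and i: "i < n"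
  shows "(if i \<in> R then v $ i else 0) + (if flip i \<in> R then v $ flip i else 0) = v $ i"
proof -
  have v_i: "v $ i = (if paired i then v $ flip i else 0)" using v i unfolding flip_invariant_vecs_def by simp
  consider "i \<in> R" | "flip i \<in> R" | "\<not> paired i" unfolding paired_def by blast
  then show ?thesis
  proof cases
    case 1
    then show ?thesis using flip_notin_R by simp
  next
    case 2
    then have "i \<notin> R" using flip_notin_R[OF 2] i by auto
    moreover have "paired i" using 2 unfolding paired_def by simp
    ultimately show ?thesis using 2 v_i by simp
  next
    case 3
    then show ?thesis using v_i unfolding paired_def by auto
  qed
qed

lemma span_pair_states_subset:
  "module.span class_ring (module_vec TYPE(complex) n) (pair_state n ` R) \<subseteq> flip_invariant_vecs"
proof
  interpret V: vec_space "TYPE(complex)" n .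
  fix v assume "v \<in> V.span (pair_state n ` R)"
  then obtain a A where A: "v = V.lincomb a A" "A \<subseteq> pair_state n ` R" using V.in_spanE by blast
  then have Ac: "A \<subseteq> carrier_vec n" by auto
  have "v $ i = (if paired i then v $ flip i else 0)" if i: "i < n" for i
  proof -
    have x: "x $ i = (if paired i then x $ flip i else 0)" if "x \<in> A" for x
      using that A(2) pair_state_flip_invariant i unfolding flip_invariant_vecs_def by blast
    have "flip i < n" using i by simp
    show ?thesis
      unfolding A(1) V.lincomb_index[OF i Ac] V.lincomb_index[OF \<open>flip i < n\<close> Ac]
      by (cases "paired i") (simp_all add: x cong: sum.cong)
  qed
  moreover have "v \<in> carrier_vec n" using A(1) V.lincomb_closed[OF Ac] by simp
  ultimately show "v \<in> flip_invariant_vecs" unfolding flip_invariant_vecs_def by simp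
qed

lemma flip_invariant_subset_span:
  "flip_invariant_vecs \<subseteq> module.span class_ring (module_vec TYPE(complex) n) (pair_state n ` R)"
proof
  interpret V: vec_space "TYPE(complex)" n .
  let ?B = "pair_state n ` R"
  have B: "finite ?B" "?B \<subseteq> carrier_vec n" using finite_R by auto
  fix v assume v: "v \<in> flip_invariant_vecs"
  define a where "a x = complex_of_real (sqrt 2) * v $ inv_into R (pair_state n) x" for x
  have a: "a (pair_state n m) = complex_of_real (sqrt 2) * v $ m" if "m \<in> R" for m
    unfolding a_def using inv_into_f_f[OF inj_on_pair_state that] by simp
  have half: "complex_of_real (1 / sqrt 2) * complex_of_real (sqrt 2) = 1"
    by (simp flip: of_real_mult)
  have "v = V.lincomb a ?B"
  proof (rule eq_vecI)
    fix i assume "i < dim_vec (V.lincomb a ?B)"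
    then have i: "i < n" using V.lincomb_dim[OF B] by simp
    have "V.lincomb a ?B $ i = (\<Sum>m\<in>R. a (pair_state n m) * pair_state n m $ i)"
      unfolding V.lincomb_index[OF i B(2)] by (rule sum.reindex[OF inj_on_pair_state, unfolded comp_def])
    also have "\<dots> = (\<Sum>m\<in>R. complex_of_real (sqrt 2) * v $ m * pair_state n m $ i)"
      by (rule sum.cong) (simp_all add: a)
    also have "\<dots> = (if i \<in> R then v $ i else 0) + (if flip i \<in> R then v $ flip i else 0)"
      unfolding sum_pair_states_index[OF i] using half by (simp add: algebra_simps)
    also have "\<dots> = v $ i" by (rule flip_invariant_index[OF v i])
    finally show "v $ i = V.lincomb a ?B $ i" by simp
  qed (use v V.lincomb_dim[OF B] in \<open>simp add: flip_invariant_vecs_def\<close>)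
  then show "v \<in> V.span ?B" using B(1) by (intro V.in_spanI[of v a ?B]) auto
qed

lemma span_pair_states:
  "module.span class_ring (module_vec TYPE(complex) n) (pair_state n ` R) = flip_invariant_vecs"
  using span_pair_states_subset flip_invariant_subset_span by (rule subset_antisym)

lemma lin_indpt_pair_states:
  "\<not> module.lin_dep class_ring (module_vec TYPE(complex) n) (pair_state n ` R)"
proof -
  interpret V: vec_space "TYPE(complex)" n .
  let ?B = "pair_state n ` R"
  have B: "finite ?B" "?B \<subseteq> carrier_vec n" using finite_R by auto
  have "a x = 0" if lc: "V.lincomb a ?B = 0\<^sub>v n" and "x \<in> ?B" for a x
  proof -
    obtain m where m: "m \<in> R" and x: "x = pair_state n m" using \<open>x \<in> ?B\<close> by blast
    have "0 = V.lincomb a ?B $ m" using lc R_less[OF m] by simp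
    also have "\<dots> = (\<Sum>m'\<in>R. a (pair_state n m') * pair_state n m' $ m)"
      unfolding V.lincomb_index[OF R_less[OF m] B(2)]
      by (rule sum.reindex[OF inj_on_pair_state, unfolded comp_def])
    also have "\<dots> = complex_of_real (1 / sqrt 2) * a x"
      unfolding sum_pair_states_index[OF R_less[OF m]] using m flip_notin_R[OF m] x by simp
    finally show "a x = 0" by simp
  qed
  then have "V.lin_indpt ?B" by (intro V.finite_lin_indpt2[OF B]) blast
  then show ?thesis by simp
qed

theorem eigenspace_flip_mat_basis:
  assumes "c \<noteq> 0"
  shows "eigenspace (flip_mat c) c = module.span class_ring (module_vec TYPE(complex) n) (pair_state n ` R)"
    and "dim_gen_eigenspace (flip_mat c) c 1 = card R"
proof -
  show span: "eigenspace (flip_mat c) c = module.span class_ring (module_vec TYPE(complex) n) (pair_state n ` R)"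
    unfolding eigenspace_flip_mat[OF assms] span_pair_states ..
  have "dim_gen_eigenspace (flip_mat c) c 1 = card (pair_state n ` R)"
    by (rule dim_gen_eigenspace_1_eq_card_basis[OF flip_mat_carrier _ _ lin_indpt_pair_states span[symmetric]])
      (use finite_R in auto)
  then show "dim_gen_eigenspace (flip_mat c) c 1 = card R"
    using card_image[OF inj_on_pair_state] by simp
qed

end

lemma eq_mult_add_iff:
  fixes i c x D :: nat
  assumes "x < D"
  shows "i = D * c + x \<longleftrightarrow> i div D = c \<and> i mod D = x"
  using assms by auto

lemma add_eq_mult_minus_one_iff:
  fixes x y M K :: nat
  assumes "x < M * K" "y < M * K"
  shows "x + y = M * K - 1 \<longleftrightarrow> x div M + y div M = K - 1 \<and> x mod M + y mod M = M - 1"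
proof -
  have "0 < M * K" using le_less_trans[OF le0 assms(1)] .
  then have M: "M > 0" and K: "K > 0" by simp_all
  define a b r s where "a = x div M" "b = y div M" "r = x mod M" "s = y mod M"
  have rs: "r < M" "s < M" using M unfolding a_b_r_s_def by simp_all
  have key: "x + y + 1 = M * (a + b) + (r + s + 1)"
    unfolding a_b_r_s_def by (simp add: algebra_simps)
  have "x + y + 1 = M * K \<longleftrightarrow> a + b + 1 = K \<and> r + s + 1 = M"
  proof
    assume h: "x + y + 1 = M * K"
    \<comment> \<open>No carry: \<open>r + s + 1\<close> is a multiple of \<open>M\<close> strictly between \<open>0\<close> and \<open>2M\<close>.\<close>
    define t where "t = K - (a + b)"
    have t: "r + s + 1 = M * t" using h key unfolding t_def by (simp add: diff_mult_distrib2)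
    have "M * t < M * 2" using rs t by linarith
    then have "t < 2" by simp
    moreover have "t \<noteq> 0" using t by (intro notI) simp
    ultimately have rsM: "r + s + 1 = M" using t by (simp add: less_2_cases_iff)
    then have "M * (a + b + 1) = M * K" using h key by (simp add: algebra_simps)
    then have "a + b + 1 = K" using M by (metis mult_left_cancel not_gr0)
    with rsM show "a + b + 1 = K \<and> r + s + 1 = M" by blast
  next
    assume "a + b + 1 = K \<and> r + s + 1 = M"
    then have K': "K = a + b + 1" and M': "r + s + 1 = M" by simp_all
    show "x + y + 1 = M * K" unfolding key K' M' by (simp add: algebra_simps)
  qed
  then show ?thesis using M K unfolding a_b_r_s_def by auto
qed

lemma power_two_pred: "N \<ge> 1 \<Longrightarrow> (2::nat) ^ N = 2 ^ (N - 1) * 2"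
  by (cases N) (simp_all add: mult.commute)

lemma power_two_eq_four_mult: "N \<ge> 2 \<Longrightarrow> (2::nat) ^ N = 4 * 2 ^ (N - 2)"
  using power_two_pred[of N] power_two_pred[of "N - 1"] by simp

lemma flip_index_mod_four:
  fixes i :: nat
  assumes N: "N \<ge> 2" and i: "i < 2 ^ N"
  shows "(2 ^ N - 1 - i) mod 4 = 3 - i mod 4"
proof -
  define T where "T = (2::nat) ^ (N - 2)"
  have "i div 4 < T" using i power_two_eq_four_mult[OF N] unfolding T_def
    by (simp add: less_mult_imp_div_less mult.commute)
  then have "2 ^ N - 1 - i = (3 - i mod 4) + (T - 1 - i div 4) * 4"
    using power_two_eq_four_mult[OF N] div_mult_mod_eq[of i 4] unfolding T_def[symmetric] by linarith
  then have "(2 ^ N - 1 - i) mod 4 = (3 - i mod 4) mod 4" by (simp only: mod_mult_self1)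
  then show ?thesis by simp
qed

section \<open>The CHSH operator in the computational basis\<close>

lemma sigma_x_carrier[simp]: "sigma_x \<in> carrier_mat 2 2"
  and sigma_y_carrier[simp]: "sigma_y \<in> carrier_mat 2 2"
  unfolding sigma_x_def sigma_y_def mat_of_rows_list_def by (simp_all add: numeral_2_eq_2)

lemma sigma_dims[simp]:
  "dim_row sigma_x = 2" "dim_col sigma_x = 2" "dim_row sigma_y = 2" "dim_col sigma_y = 2"
  using sigma_x_carrier sigma_y_carrier unfolding carrier_mat_def by blast+

lemma sigma_x_index: "a < 2 \<Longrightarrow> b < 2 \<Longrightarrow> sigma_x $$ (a, b) = (if a + b = 1 then 1 else 0)"
  by (auto simp: sigma_x_def mat_of_rows_list_def less_2_cases_iff)

lemma sigma_y_index:
  "a < 2 \<Longrightarrow> b < 2 \<Longrightarrow> sigma_y $$ (a, b) = (if a = b then 0 else if a = 0 then -\<i> else \<i>)"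
  by (auto simp: sigma_y_def mat_of_rows_list_def less_2_cases_iff)

lemma kron_dims[simp]:
  "dim_row (kron A B) = dim_row A * dim_row B" "dim_col (kron A B) = dim_col A * dim_col B"
  by (simp_all add: kron_def)

lemma index_kron:
  "i < dim_row A * dim_row B \<Longrightarrow> j < dim_col A * dim_col B \<Longrightarrow>
    kron A B $$ (i, j) = A $$ (i div dim_row B, j div dim_col B) * B $$ (i mod dim_row B, j mod dim_col B)"
  by (simp add: kron_def)

lemma kron_carrier:
  assumes "A \<in> carrier_mat r c" "B \<in> carrier_mat r' c'"
  shows "kron A B \<in> carrier_mat (r * r') (c * c')"
  using carrier_matD[OF assms(1)] carrier_matD[OF assms(2)] by (intro carrier_matI) simp_all

lemma kron_one_right: "kron A (1\<^sub>m 1) = A"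
  by (rule eq_matI) (auto simp: kron_def)

lemma foldr_kron_sigma_x:
  assumes B: "B \<in> carrier_mat d d" and d: "d > 0"
  shows "foldr kron (replicate m sigma_x) B = mat (2 ^ m * d) (2 ^ m * d)
    (\<lambda>(i, j). if i div d + j div d = 2 ^ m - 1 then B $$ (i mod d, j mod d) else 0)"
proof (induction m)
  case 0
  show ?case using B by (intro eq_matI) auto
next
  case (Suc m)
  let ?D = "2 ^ m * d"
  have split: "p div ?D = (p div d) div 2 ^ m" "(p mod ?D) div d = (p div d) mod 2 ^ m"
    "(p mod ?D) mod d = p mod d" for p
    using d by (simp_all add: div_mult2_eq mod_mult2_eq mult.commute)
  have blocks: "(p div ?D + q div ?D = 1 \<and> (p div d) mod 2 ^ m + (q div d) mod 2 ^ m = 2 ^ m - 1)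
      \<longleftrightarrow> p div d + q div d = 2 ^ Suc m - 1" if "p < 2 * ?D" "q < 2 * ?D" for p q
  proof -
    have "p div d < 2 ^ m * 2" "q div d < 2 ^ m * 2"
      using that d by (auto simp: div_less_iff_less_mult mult.assoc mult.commute)
    from add_eq_mult_minus_one_iff[OF this] show ?thesis unfolding split by (simp add: mult.commute)
  qed
  show ?case
  proof (rule eq_matI)
    fix i j assume "i < dim_row (mat (2 ^ Suc m * d) (2 ^ Suc m * d)
       (\<lambda>(i, j). if i div d + j div d = 2 ^ Suc m - 1 then B $$ (i mod d, j mod d) else 0))"
      "j < dim_col (mat (2 ^ Suc m * d) (2 ^ Suc m * d)
       (\<lambda>(i, j). if i div d + j div d = 2 ^ Suc m - 1 then B $$ (i mod d, j mod d) else 0))"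
    then have i: "i < 2 * ?D" and j: "j < 2 * ?D" by auto
    have "i div ?D < 2" "j div ?D < 2"
      using less_mult_imp_div_less[of i 2 ?D] less_mult_imp_div_less[of j 2 ?D] i j by auto
    then show "foldr kron (replicate (Suc m) sigma_x) B $$ (i, j) = mat (2 ^ Suc m * d) (2 ^ Suc m * d)
       (\<lambda>(i, j). if i div d + j div d = 2 ^ Suc m - 1 then B $$ (i mod d, j mod d) else 0) $$ (i, j)"
      using i j blocks[OF i j] d
      by (auto simp: Suc.IH kron_def sigma_x_index split[of i] split[of j] simp del: foldr_replicate)
  qed (simp_all add: Suc.IH del: foldr_replicate)
qed

lemma foldr_kron_sigma_x_carrier:
  "B \<in> carrier_mat d d \<Longrightarrow> foldr kron (replicate m sigma_x) B \<in> carrier_mat (2 ^ m * d) (2 ^ m * d)"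
  by (induction m) (auto dest: kron_carrier[OF sigma_x_carrier] simp: mult.assoc)

lemma AA_eq_foldr_kron:
  assumes "N \<ge> 2"
  shows "AA N a = foldr kron (replicate (N - 2) sigma_x) (if a = 0 then sigma_x else sigma_y)"
proof -
  define k where "k = N - 2"
  have k: "N = k + 2" using assms unfolding k_def by simp
  have "map (if a = 0 then X N else X' N) [1..<k + 1] = map (\<lambda>_. sigma_x) [1..<k + 1]"
    by (rule map_cong) (auto simp: X_def X'_def k)
  then have "map (if a = 0 then X N else X' N) [1..<N] =
      replicate k sigma_x @ [if a = 0 then sigma_x else sigma_y]"
    by (simp add: k map_replicate_const X_def X'_def)
  then show ?thesis
    unfolding AA_def kron_list_def k_def[symmetric]
    by (simp add: kron_one_right[simplified] del: foldr_replicate)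
qed

lemma AA_index:
  assumes N: "N \<ge> 2" and p: "p < 2 ^ (N - 1)" and q: "q < 2 ^ (N - 1)"
  shows "AA N a $$ (p, q) =
    (if p div 2 + q div 2 = 2 ^ (N - 2) - 1 then (if a = 0 then sigma_x else sigma_y) $$ (p mod 2, q mod 2) else 0)"
proof -
  have "(2::nat) ^ (N - 1) = 2 ^ (N - 2) * 2" using power_two_pred[of "N - 1"] N by simp
  then show ?thesis
    using p q unfolding AA_eq_foldr_kron[OF N]
    by (simp add: foldr_kron_sigma_x[OF sigma_x_carrier] foldr_kron_sigma_x[OF sigma_y_carrier]
        del: foldr_replicate)
qed

lemma AA_carrier:
  assumes N: "N \<ge> 2"
  shows "AA N a \<in> carrier_mat (2 ^ (N - 1)) (2 ^ (N - 1))"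
proof -
  have "(2::nat) ^ (N - 1) = 2 ^ (N - 2) * 2" using power_two_pred[of "N - 1"] N by simp
  then show ?thesis
    unfolding AA_eq_foldr_kron[OF N] using foldr_kron_sigma_x_carrier[of _ 2 "N - 2"] by simp
qed

lemma AA_two: "AA 2 a = (if a = 0 then sigma_x else sigma_y)"
  using AA_eq_foldr_kron[of 2 a] by simp

lemma BB_carrier: "BB N b \<in> carrier_mat 2 2"
  by (simp add: BB_def X_def X'_def minus_carrier_mat)

lemma BB_two: "BB N b = BB 2 b"
  by (simp add: BB_def X_def X'_def)

lemma I_CHSH_carrier:
  assumes N: "N \<ge> 2"
  shows "I_CHSH N \<in> carrier_mat (2 ^ N) (2 ^ N)"
proof -
  have "kron (AA N a) (BB N b) \<in> carrier_mat (2 ^ N) (2 ^ N)" for a b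
    using kron_carrier[OF AA_carrier[OF N] BB_carrier] power_two_pred[of N] N by simp
  then show ?thesis unfolding I_CHSH_def by simp
qed

lemma I_CHSH_index:
  assumes N: "N \<ge> 2" and i: "i < 2 ^ N" and j: "j < 2 ^ N"
  shows "I_CHSH N $$ (i, j) =
    AA N 0 $$ (i div 2, j div 2) * (BB N 0 $$ (i mod 2, j mod 2) + BB N 1 $$ (i mod 2, j mod 2))
    + AA N 1 $$ (i div 2, j div 2) * (BB N 0 $$ (i mod 2, j mod 2) - BB N 1 $$ (i mod 2, j mod 2))"
proof -
  have ij: "i < 2 ^ (N - 1) * 2" "j < 2 ^ (N - 1) * 2" using i j power_two_pred[of N] N by simp_all
  have dims: "dim_row (AA N a) = 2 ^ (N - 1)" "dim_col (AA N a) = 2 ^ (N - 1)"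
    "dim_row (BB N b) = 2" "dim_col (BB N b) = 2" for a b
    using AA_carrier[OF N, of a] BB_carrier[of N b] by auto
  have "I_CHSH N $$ (i, j) = kron (AA N 0) (BB N 0) $$ (i, j) + kron (AA N 0) (BB N 1) $$ (i, j)
      + kron (AA N 1) (BB N 0) $$ (i, j) - kron (AA N 1) (BB N 1) $$ (i, j)"
    using ij unfolding I_CHSH_def by (simp add: dims)
  also have "\<dots> = AA N 0 $$ (i div 2, j div 2) * (BB N 0 $$ (i mod 2, j mod 2) + BB N 1 $$ (i mod 2, j mod 2))
    + AA N 1 $$ (i div 2, j div 2) * (BB N 0 $$ (i mod 2, j mod 2) - BB N 1 $$ (i mod 2, j mod 2))"
    using ij by (simp add: index_kron dims distrib_left right_diff_distrib)
  finally show ?thesis .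
qed

lemma I_CHSH_index_reduce:
  assumes N: "N \<ge> 2" and i: "i < 2 ^ N" and j: "j < 2 ^ N"
  shows "I_CHSH N $$ (i, j) =
    (if i div 4 + j div 4 = 2 ^ (N - 2) - 1 then I_CHSH 2 $$ (i mod 4, j mod 4) else 0)"
proof -
  have half: "i div 2 < 2 ^ (N - 1)" "j div 2 < 2 ^ (N - 1)"
    using i j power_two_pred[of N] N less_mult_imp_div_less[of _ "2 ^ (N - 1)" 2] by auto
  have digits: "p div 2 div 2 = p div 4" "p div 2 mod 2 = p mod 4 div 2" "p mod 4 mod 2 = p mod 2"
    for p :: nat
  proof -
    have "p mod 4 = 2 * (p div 2 mod 2) + p mod 2" using mod_mult2_eq[of p 2 2] by simp
    then show "p div 2 div 2 = p div 4" "p div 2 mod 2 = p mod 4 div 2" "p mod 4 mod 2 = p mod 2"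
      by (simp_all add: div_mult2_eq)
  qed
  have mod4: "i mod 4 < 2 ^ 2" "j mod 4 < 2 ^ 2" by simp_all
  show ?thesis
    unfolding I_CHSH_index[OF N i j] I_CHSH_index[OF order_refl mod4]
    by (simp add: AA_index[OF N half] AA_two BB_two[of N] digits)
qed

lemma I_CHSH_two_index:
  assumes "r < 4" "s < 4"
  shows "I_CHSH 2 $$ (r, s) = (if r + s = 3 \<and> (r = 0 \<or> r = 3) then complex_of_real (2 * sqrt 2) else 0)"
proof -
  let ?q = "complex_of_real (sqrt 2)"
  have q: "?q * ?q = 2" "?q \<noteq> 0" by (simp_all flip: of_real_mult)
  have B: "BB 2 0 $$ (p, p') + BB 2 1 $$ (p, p') = ?q * sigma_x $$ (p, p')"
    "BB 2 0 $$ (p, p') - BB 2 1 $$ (p, p') = - (?q * sigma_y $$ (p, p'))" if "p < 2" "p' < 2" for p p'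
    using that q by (simp_all add: BB_def X_def X'_def field_simps)
  have rs: "r < 2 ^ 2" "s < 2 ^ 2" and mod2: "r mod 2 < 2" "s mod 2 < 2" using assms by simp_all
  have "I_CHSH 2 $$ (r, s) = sigma_x $$ (r div 2, s div 2) * (?q * sigma_x $$ (r mod 2, s mod 2))
      + sigma_y $$ (r div 2, s div 2) * - (?q * sigma_y $$ (r mod 2, s mod 2))"
    unfolding I_CHSH_index[OF order_refl rs] AA_two B[OF mod2] by simp
  also have "\<dots> = ?q * (sigma_x $$ (r div 2, s div 2) * sigma_x $$ (r mod 2, s mod 2)
      - sigma_y $$ (r div 2, s div 2) * sigma_y $$ (r mod 2, s mod 2))"
    by (simp add: algebra_simps)
  also have "\<dots> = ?q * (if r + s = 3 \<and> (r = 0 \<or> r = 3) then 2 else 0)"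
  proof -
    have "r \<in> {0, 1, 2, 3}" "s \<in> {0, 1, 2, 3}" using assms by auto
    then show ?thesis by (auto simp: sigma_x_index sigma_y_index)
  qed
  also have "\<dots> = (if r + s = 3 \<and> (r = 0 \<or> r = 3) then complex_of_real (2 * sqrt 2) else 0)"
    by simp
  finally show ?thesis .
qed

text \<open>The labels \<open>m\<close> of the states \<open>(|m\<rangle> + |2\<^sup>N-1-m\<rangle>)/\<surd>2\<close> spanning the eigenspace: the basis
  indices whose last two bits are \<open>00\<close>.\<close>
definition ghz_labels :: "nat \<Rightarrow> nat set" where
  "ghz_labels N = (\<lambda>k. 4 * k) ` {..<2 ^ (N - 2)}"

lemma mem_ghz_labels:
  assumes N: "N \<ge> 2"
  shows "m \<in> ghz_labels N \<longleftrightarrow> m < 2 ^ N \<and> m mod 4 = 0"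
proof
  assume "m \<in> ghz_labels N"
  then show "m < 2 ^ N \<and> m mod 4 = 0"
    unfolding ghz_labels_def power_two_eq_four_mult[OF N] by auto
next
  assume m: "m < 2 ^ N \<and> m mod 4 = 0"
  then have "m = 4 * (m div 4)" using div_mult_mod_eq[of m 4] by linarith
  moreover have "m div 4 < 2 ^ (N - 2)"
    using m power_two_eq_four_mult[OF N] by (simp add: less_mult_imp_div_less mult.commute)
  ultimately show "m \<in> ghz_labels N" unfolding ghz_labels_def by blast
qed

lemma card_ghz_labels: "card (ghz_labels N) = 2 ^ (N - 2)"
  by (simp add: ghz_labels_def card_image inj_on_def)

lemma flip_pairs_ghz_labels:
  assumes N: "N \<ge> 2"
  shows "flip_pairs (2 ^ N) (ghz_labels N)"
proof
  fix m assume "m \<in> ghz_labels N"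
  then have m: "m < 2 ^ N" "m mod 4 = 0" using mem_ghz_labels[OF N] by auto
  then show "m < 2 ^ N" by simp
  have "(2 ^ N - 1 - m) mod 4 = 3" using flip_index_mod_four[OF N m(1)] m(2) by simp
  then show "2 ^ N - 1 - m \<notin> ghz_labels N" using mem_ghz_labels[OF N] by simp
qed

lemma paired_ghz_labels:
  assumes N: "N \<ge> 2" and i: "i < 2 ^ N"
  shows "flip_pairs.paired (2 ^ N) (ghz_labels N) i \<longleftrightarrow> i mod 4 = 0 \<or> i mod 4 = 3"
proof -
  interpret G: flip_pairs "2 ^ N" "ghz_labels N" by (rule flip_pairs_ghz_labels[OF N])
  have "2 ^ N - 1 - i < 2 ^ N" using i by simp
  then show ?thesis
    using flip_index_mod_four[OF N i] i unfolding G.paired_def mem_ghz_labels[OF N] by auto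
qed

theorem I_CHSH_eq_flip_mat:
  assumes N: "N \<ge> 2"
  shows "I_CHSH N = flip_pairs.flip_mat (2 ^ N) (ghz_labels N) (complex_of_real (2 * sqrt 2))"
proof -
  interpret G: flip_pairs "2 ^ N" "ghz_labels N" by (rule flip_pairs_ghz_labels[OF N])
  show ?thesis
  proof (rule eq_matI)
    fix i j
    assume "i < dim_row (G.flip_mat (complex_of_real (2 * sqrt 2)))"
      "j < dim_col (G.flip_mat (complex_of_real (2 * sqrt 2)))"
    then have i: "i < 2 ^ N" and j: "j < 2 ^ N" by simp_all
    define T where "T = (2::nat) ^ (N - 2)"
    have "j = 2 ^ N - 1 - i \<longleftrightarrow> i + j = 4 * T - 1"
      using i j power_two_eq_four_mult[OF N] unfolding T_def by auto
    also have "\<dots> \<longleftrightarrow> i div 4 + j div 4 = T - 1 \<and> i mod 4 + j mod 4 = 3"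
      using add_eq_mult_minus_one_iff[of i 4 T j] i j power_two_eq_four_mult[OF N] unfolding T_def by simp
    finally have flip: "j = 2 ^ N - 1 - i \<longleftrightarrow> i div 4 + j div 4 = T - 1 \<and> i mod 4 + j mod 4 = 3" .
    show "I_CHSH N $$ (i, j) = G.flip_mat (complex_of_real (2 * sqrt 2)) $$ (i, j)"
      using i j flip unfolding I_CHSH_index_reduce[OF N i j] T_def[symmetric]
      by (auto simp: I_CHSH_two_index G.flip_mat_def paired_ghz_labels[OF N i])
  qed (use I_CHSH_carrier[OF N] in simp_all)
qed

section \<open>The states \<open>\<sigma>\<^sub>x\<^sup>K|G\<rangle>\<close>\<close>

text \<open>Most significant bit first, matching the qubit order of \<open>kron_list\<close>.\<close>
fun nat_of_bits :: "bool list \<Rightarrow> nat" where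
  "nat_of_bits [] = 0"
| "nat_of_bits (b # bs) = (if b then 2 ^ length bs else 0) + nat_of_bits bs"

lemma nat_of_bits_less: "nat_of_bits bs < 2 ^ length bs"
  by (induction bs) auto

lemma nat_of_bits_append: "nat_of_bits (xs @ ys) = nat_of_bits xs * 2 ^ length ys + nat_of_bits ys"
  by (induction xs) (auto simp: power_add algebra_simps)

lemma ex_nat_of_bits_eq:
  assumes "x < 2 ^ m"
  shows "\<exists>K \<subseteq> {a..<a + m}. nat_of_bits (map (\<lambda>k. k \<in> K) [a..<a + m]) = x"
  using assms
proof (induction m arbitrary: a x)
  case 0
  then show ?case by auto
next
  case (Suc m)
  have bits: "nat_of_bits (map f [a..<a + Suc m]) = (if f a then 2 ^ m else 0) + nat_of_bits (map f [Suc a..<Suc a + m])"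
    for f :: "nat \<Rightarrow> bool"
    by (simp add: upt_conv_Cons del: upt_Suc)
  show ?case
  proof (cases "x < 2 ^ m")
    case True
    from Suc.IH[OF True, of "Suc a"] obtain K where
      K: "K \<subseteq> {Suc a..<Suc a + m}" "nat_of_bits (map (\<lambda>k. k \<in> K) [Suc a..<Suc a + m]) = x" by blast
    then have "a \<notin> K" by auto
    with K show ?thesis unfolding bits by (intro exI[of _ K]) auto
  next
    case False
    then have "x - 2 ^ m < 2 ^ m" using Suc.prems by simp
    from Suc.IH[OF this, of "Suc a"] obtain K where K: "K \<subseteq> {Suc a..<Suc a + m}"
      "nat_of_bits (map (\<lambda>k. k \<in> K) [Suc a..<Suc a + m]) = x - 2 ^ m" by blast
    have same: "map (\<lambda>k. k \<in> insert a K) [Suc a..<Suc a + m] = map (\<lambda>k. k \<in> K) [Suc a..<Suc a + m]"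
      by (rule map_cong) auto
    have "nat_of_bits (map (\<lambda>k. k \<in> insert a K) [a..<a + Suc m]) = x"
      unfolding bits same K(2) using False by simp
    moreover have "insert a K \<subseteq> {a..<a + Suc m}" using K(1) by auto
    ultimately show ?thesis by blast
  qed
qed

definition sigma_x_string :: "bool list \<Rightarrow> complex mat" where
  "sigma_x_string bs = kron_list (map (\<lambda>b. if b then sigma_x else 1\<^sub>m 2) bs)"

lemma sigma_x_string_Cons:
  "sigma_x_string (b # bs) = kron (if b then sigma_x else 1\<^sub>m 2) (sigma_x_string bs)"
  by (simp add: sigma_x_string_def kron_list_def)

lemma sigma_x_string_carrier:
  "sigma_x_string bs \<in> carrier_mat (2 ^ length bs) (2 ^ length bs)"
proof (induction bs)
  case Nil
  then show ?case by (simp add: sigma_x_string_def kron_list_def)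
next
  case (Cons b bs)
  have "(if b then sigma_x else 1\<^sub>m 2) \<in> carrier_mat 2 2" by simp
  from kron_carrier[OF this Cons.IH] show ?case by (simp add: sigma_x_string_Cons)
qed

text \<open>Column \<open>0\<close> and the last column of a string of \<open>\<sigma>\<^sub>x\<close>'s and identities, i.e. its action on
  \<open>|0\<dots>0\<rangle>\<close> and \<open>|1\<dots>1\<rangle>\<close>.\<close>
lemma sigma_x_string_first_col:
  "i < 2 ^ length bs \<Longrightarrow> sigma_x_string bs $$ (i, 0) = (if i = nat_of_bits bs then 1 else 0)"
proof (induction bs arbitrary: i)
  case Nil
  then show ?case by (simp add: sigma_x_string_def kron_list_def)
next
  case (Cons b bs)
  define D where "D = (2::nat) ^ length bs"
  have R: "sigma_x_string bs \<in> carrier_mat D D" unfolding D_def by (rule sigma_x_string_carrier)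
  have i: "i div D < 2" "i mod D < D" using Cons.prems unfolding D_def by (auto simp: less_mult_imp_div_less)
  have "nat_of_bits (b # bs) = D * (if b then 1 else 0) + nat_of_bits bs" unfolding D_def by simp
  moreover have "nat_of_bits bs < D" unfolding D_def by (rule nat_of_bits_less)
  ultimately have "i = nat_of_bits (b # bs) \<longleftrightarrow> i div D = (if b then 1 else 0) \<and> i mod D = nat_of_bits bs"
    using eq_mult_add_iff by presburger
  moreover have "sigma_x_string (b # bs) $$ (i, 0) =
      (if b then sigma_x else 1\<^sub>m 2) $$ (i div D, 0) * sigma_x_string bs $$ (i mod D, 0)"
    using Cons.prems R unfolding sigma_x_string_Cons D_def by (simp add: index_kron carrier_matD)
  ultimately show ?case
    using i Cons.IH[OF i(2)[unfolded D_def]] unfolding D_def by (auto simp: sigma_x_index less_2_cases_iff)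
qed

lemma sigma_x_string_last_col:
  "i < 2 ^ length bs \<Longrightarrow>
    sigma_x_string bs $$ (i, 2 ^ length bs - 1) = (if i = 2 ^ length bs - 1 - nat_of_bits bs then 1 else 0)"
proof (induction bs arbitrary: i)
  case Nil
  then show ?case by (simp add: sigma_x_string_def kron_list_def)
next
  case (Cons b bs)
  define D where "D = (2::nat) ^ length bs"
  have D: "D > 0" "2 ^ length (b # bs) = 2 * D" unfolding D_def by simp_all
  have R: "sigma_x_string bs \<in> carrier_mat D D" unfolding D_def by (rule sigma_x_string_carrier)
  have i: "i div D < 2" "i mod D < D" using Cons.prems D by (auto simp: less_mult_imp_div_less)
  have "2 * D - 1 = D * 1 + (D - 1)" using D(1) by arith
  from eq_mult_add_iff[THEN iffD1, OF _ this]
  have last: "(2 * D - 1) div D = 1 \<and> (2 * D - 1) mod D = D - 1" using D(1) by simp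
  have "2 * D - 1 - nat_of_bits (b # bs) = D * (if b then 0 else 1) + (D - 1 - nat_of_bits bs)"
    using nat_of_bits_less[of bs] unfolding D_def by auto
  moreover have "D - 1 - nat_of_bits bs < D" using D(1) by simp
  ultimately have "i = 2 * D - 1 - nat_of_bits (b # bs) \<longleftrightarrow>
      i div D = (if b then 0 else 1) \<and> i mod D = D - 1 - nat_of_bits bs"
    using eq_mult_add_iff by presburger
  moreover have "sigma_x_string (b # bs) $$ (i, 2 * D - 1) =
      (if b then sigma_x else 1\<^sub>m 2) $$ (i div D, 1) * sigma_x_string bs $$ (i mod D, D - 1)"
    using Cons.prems R D last unfolding sigma_x_string_Cons by (simp add: index_kron carrier_matD)
  ultimately show ?case
    using i Cons.IH[OF i(2)[unfolded D_def]] unfolding D(2) unfolding D_def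
    by (auto simp: sigma_x_index less_2_cases_iff)
qed

lemma ghz_eq_pair_state: "ghz N = pair_state (2 ^ N) 0"
  by (simp add: ghz_def pair_state_def)

lemma sigma_x_string_mult_ghz:
  assumes "bs \<noteq> []"
  shows "sigma_x_string bs *\<^sub>v ghz (length bs) = pair_state (2 ^ length bs) (nat_of_bits bs)"
proof -
  define n where "n = (2::nat) ^ length bs"
  let ?L = "sigma_x_string bs" and ?h = "complex_of_real (1 / sqrt 2)"
  have L: "?L \<in> carrier_mat n n" unfolding n_def by (rule sigma_x_string_carrier)
  have len: "1 \<le> length bs" using assms by (cases bs) auto
  have n: "0 < n - 1" "even n" unfolding n_def using len power_increasing[OF len, of "2::nat"] by auto
  have ne: "nat_of_bits bs \<noteq> n - 1 - nat_of_bits bs"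
  proof
    assume "nat_of_bits bs = n - 1 - nat_of_bits bs"
    then have "n = 2 * nat_of_bits bs + 1" using n(1) nat_of_bits_less[of bs] unfolding n_def[symmetric] by arith
    with n(2) show False by simp
  qed
  show ?thesis
  proof (rule eq_vecI)
    fix i assume "i < dim_vec (pair_state (2 ^ length bs) (nat_of_bits bs))"
    then have i: "i < n" unfolding n_def by simp
    have "(?L *\<^sub>v ghz (length bs)) $ i = (\<Sum>j<n. ?L $$ (i, j) * pair_state n 0 $ j)"
      using L i unfolding ghz_eq_pair_state n_def[symmetric]
      by (simp add: scalar_prod_def atLeast0LessThan)
    also have "\<dots> = (\<Sum>j<n. (if j = 0 then ?L $$ (i, j) * ?h else 0) + (if j = n - 1 then ?L $$ (i, j) * ?h else 0))"
      using n by (intro sum.cong) (auto simp: pair_state_index)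
    also have "\<dots> = ?L $$ (i, 0) * ?h + ?L $$ (i, n - 1) * ?h"
      using n by (simp add: sum.distrib)
    also have "\<dots> = pair_state n (nat_of_bits bs) $ i"
      using i ne sigma_x_string_first_col[of i bs] sigma_x_string_last_col[of i bs]
      unfolding n_def[symmetric] by (auto simp: pair_state_index)
    finally show "(?L *\<^sub>v ghz (length bs)) $ i = pair_state (2 ^ length bs) (nat_of_bits bs) $ i"
      unfolding n_def .
  qed (use L in \<open>simp add: n_def\<close>)
qed

lemma sigma_x_on_eq_sigma_x_string: "sigma_x_on N K = sigma_x_string (map (\<lambda>k. k \<in> K) [1..<N + 1])"
  by (simp add: sigma_x_on_def sigma_x_string_def comp_def)

lemma sigma_x_on_mult_ghz:
  assumes N: "N \<ge> 2" and K: "K \<subseteq> {1..N - 2}"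
  shows "sigma_x_on N K *\<^sub>v ghz N = pair_state (2 ^ N) (4 * nat_of_bits (map (\<lambda>k. k \<in> K) [1..<N - 1]))"
proof -
  let ?bs = "map (\<lambda>k. k \<in> K) [1..<N + 1]"
  obtain k where k: "N = Suc (Suc k)" using N by (metis add_2_eq_Suc le_Suc_ex)
  have upt: "[1..<N + 1] = [1..<N - 1] @ [N - 1, N]" unfolding k by simp
  have "N - 1 \<notin> {1..N - 2}" "N \<notin> {1..N - 2}" using N by auto
  with K have "N - 1 \<notin> K" "N \<notin> K" by blast+
  with upt have "nat_of_bits ?bs = 4 * nat_of_bits (map (\<lambda>k. k \<in> K) [1..<N - 1])"
    by (simp add: nat_of_bits_append)
  moreover have "?bs \<noteq> []" "length ?bs = N" using N by auto
  ultimately show ?thesis using sigma_x_string_mult_ghz[of ?bs] unfolding sigma_x_on_eq_sigma_x_string by simp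
qed

lemma sigma_x_on_ghz_eq_pair_states:
  assumes N: "N \<ge> 2"
  shows "{sigma_x_on N K *\<^sub>v ghz N | K. K \<subseteq> {1..N - 2}} = pair_state (2 ^ N) ` ghz_labels N"
proof -
  define bits where "bits K = nat_of_bits (map (\<lambda>k. k \<in> K) [1..<N - 1])" for K
  have range: "bits ` Pow {1..N - 2} = {..<2 ^ (N - 2)}"
  proof
    have "bits K < 2 ^ (N - 2)" for K
    proof -
      have "length (map (\<lambda>k. k \<in> K) [1..<N - 1]) = N - 2" by (simp add: numeral_2_eq_2)
      with nat_of_bits_less[of "map (\<lambda>k. k \<in> K) [1..<N - 1]"] show ?thesis
        unfolding bits_def by metis
    qed
    then show "bits ` Pow {1..N - 2} \<subseteq> {..<2 ^ (N - 2)}" by auto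
    show "{..<2 ^ (N - 2)} \<subseteq> bits ` Pow {1..N - 2}"
    proof
      fix x :: nat assume "x \<in> {..<2 ^ (N - 2)}"
      then obtain K where K: "K \<subseteq> {1..<1 + (N - 2)}" "nat_of_bits (map (\<lambda>k. k \<in> K) [1..<1 + (N - 2)]) = x"
        using ex_nat_of_bits_eq[of x "N - 2" 1] by auto
      have "K \<in> Pow {1..N - 2}" using K(1) by auto
      moreover have "1 + (N - 2) = N - 1" using N by simp
      ultimately show "x \<in> bits ` Pow {1..N - 2}" using K(2) unfolding bits_def by auto
    qed
  qed
  have "{sigma_x_on N K *\<^sub>v ghz N | K. K \<subseteq> {1..N - 2}} = (\<lambda>K. sigma_x_on N K *\<^sub>v ghz N) ` Pow {1..N - 2}"
    by blast
  also have "\<dots> = (\<lambda>K. pair_state (2 ^ N) (4 * bits K)) ` Pow {1..N - 2}"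
    using sigma_x_on_mult_ghz[OF N] unfolding bits_def by (intro image_cong) auto
  also have "\<dots> = pair_state (2 ^ N) ` (\<lambda>k. 4 * k) ` bits ` Pow {1..N - 2}"
    by (simp add: image_image)
  finally show ?thesis unfolding range ghz_labels_def .
qed

theorem mainTheorem6:
  fixes N :: nat
  assumes "N \<ge> 3"
  defines "lam \<equiv> complex_of_real (2 * sqrt 2)"
  shows "eigenvalue (I_CHSH N) lam
    \<and> (\<forall>k. eigenvalue (I_CHSH N) k \<longrightarrow> k \<in> \<real> \<and> Re k \<le> Re lam)
    \<and> eigenvector (I_CHSH N) (ghz N) lam
    \<and> dim_gen_eigenspace (I_CHSH N) lam 1 = 2 ^ (N - 2)
    \<and> eigenspace (I_CHSH N) lam
        = module.span class_ring (module_vec TYPE(complex) (2 ^ N))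
            {sigma_x_on N K *\<^sub>v ghz N | K. K \<subseteq> {1..N-2}}"
proof -
  have N: "N \<ge> 2" using assms(1) by simp
  interpret G: flip_pairs "2 ^ N" "ghz_labels N" by (rule flip_pairs_ghz_labels[OF N])
  have lam: "lam \<noteq> 0" "lam \<in> \<real>" "Re lam \<ge> 0" unfolding lam_def by simp_all
  have I: "I_CHSH N = G.flip_mat lam" unfolding lam_def by (rule I_CHSH_eq_flip_mat[OF N])
  have "0 \<in> ghz_labels N" unfolding ghz_labels_def by auto
  from G.eigenvector_pair_state[OF lam(1) this]
  have ev: "eigenvector (I_CHSH N) (ghz N) lam" unfolding I ghz_eq_pair_state .
  moreover have "eigenvalue (I_CHSH N) lam" using ev unfolding eigenvalue_def by blast
  moreover have "k \<in> \<real> \<and> Re k \<le> Re lam" if "eigenvalue (I_CHSH N) k" for k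
    using G.eigenvalue_flip_mat[OF that[unfolded I]] lam by auto
  moreover have "dim_gen_eigenspace (I_CHSH N) lam 1 = 2 ^ (N - 2)"
    unfolding I G.eigenspace_flip_mat_basis(2)[OF lam(1)] card_ghz_labels ..
  moreover have "eigenspace (I_CHSH N) lam = module.span class_ring (module_vec TYPE(complex) (2 ^ N))
      {sigma_x_on N K *\<^sub>v ghz N | K. K \<subseteq> {1..N-2}}"
    unfolding I G.eigenspace_flip_mat_basis(1)[OF lam(1)] sigma_x_on_ghz_eq_pair_states[OF N] ..
  ultimately show ?thesis by blast
qed

end
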